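(* Fix $n\in\mathbb N$ and let $a$ be a configuration reachable in PSSPM from $(\underline{n})$. Then for every word $\omega\in\{\mathcal L,\mathcal R\}^*$, $$\omega(\mathcal R(a))\ \overset{*}{\triangleleft}\ \omega(\mathcal L(a)).$$
   Context: A configuration is a sequence $(c_i)_{i\in\mathbb Z}$ of nonnegative integers with only finitely many positive values; $(\underline{n})$ denotes the configuration with $c_0=n$ and $c_i=0$ otherwise. Rule $\mathcal L$ at column $i$ is applicable if $c_{i-1}+2\le c_i$ and moves one grain from column $i$ to column $i-1$; rule $\mathcal R$ at column $i$ is applicable if $c_i\ge c_{i+1}+2$ and moves one grain from column $i$ to column $i+1$. A PSSPM transition applies rules simultaneously on every column where some rule is applicable, at most one rule per column; in a configuration reachable from $(\underline{n})$ there is at most one column on which both rules are applicable (a "choice"). For a configuration $a$ reachable in PSSPM from $(\underline{n})$: $\mathcal L(a)$ is the configuration obtained by the PSSPM transition from $a$ in which rule $\mathcal L$ is chosen on the choice column if there is one (if there is no choice, the unique transition); if no rule is applicable in $a$, $\mathcal L(a)=a$. $\mathcal R(a)$ is defined symmetrically, choosing $\mathcal R$. For a word $\omega=\omega_1\cdots\omega_k$ over $\{\mathcal L,\mathcal R\}$, $\omega(a)=\omega_2\cdots\omega_k(\omega_1(a))$ (the empty word acts as identity). For configurations $a,b$, let $\Delta(a,b)$ be the sequence $\Delta_i(a,b)=a_i-b_i$. Write $a\overset{*}{\triangleleft} b$ iff every entry of $\Delta(a,b)$ lies in $\{-1,0,1\}$ and the nonzero entries, read in increasing index order, form a word in $((-1)\,1)^*$,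 i.e. alternate $-1,1,-1,1,\dots$, starting with $-1$ and ending with $1$ (in particular $a=b$ implies $a\overset{*}{\triangleleft} b$); equivalently $\Delta(a,b)\in(0^*(-1)0^*10^* )^*$ with zeros elsewhere. *)

theory Defs
  imports Main
begin

type_synonym config = "int \<Rightarrow> nat"

datatype rule = Lr | Rr

definition single :: "nat \<Rightarrow> config" where
  "single n = (\<lambda>i. if i = 0 then n else 0)"

definition L_app :: "config \<Rightarrow> int \<Rightarrow> bool" where
  "L_app c i \<longleftrightarrow> c (i - 1) + 2 \<le> c i"

definition R_app :: "config \<Rightarrow> int \<Rightarrow> bool" where
  "R_app c i \<longleftrightarrow> c i \<ge> c (i + 1) + 2"

definition admissible :: "config \<Rightarrow> (int \<Rightarrow> rule option) \<Rightarrow> bool" where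
  "admissible c d \<longleftrightarrow> (\<forall>i.
     (d i = Some Lr \<longrightarrow> L_app c i) \<and>
     (d i = Some Rr \<longrightarrow> R_app c i) \<and>
     (d i = None \<longrightarrow> \<not> L_app c i \<and> \<not> R_app c i))"

definition apply_rules :: "config \<Rightarrow> (int \<Rightarrow> rule option) \<Rightarrow> config" where
  "apply_rules c d = (\<lambda>i. c i - (if d i = None then 0 else 1)
      + (if d (i + 1) = Some Lr then 1 else 0)
      + (if d (i - 1) = Some Rr then 1 else 0))"

definition psspm_step :: "config \<Rightarrow> config \<Rightarrow> bool" where
  "psspm_step c c' \<longleftrightarrow> (\<exists>d. admissible c d \<and> c' = apply_rules c d)"

inductive reachable :: "nat \<Rightarrow> config \<Rightarrow> bool" for n where
  init: "reachable n (single n)"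
| step: "reachable n c \<Longrightarrow> psspm_step c c' \<Longrightarrow> reachable n c'"

text \<open>The transition choosing L (resp. R) on a choice column; identity if nothing applies.\<close>
definition choiceL :: "config \<Rightarrow> int \<Rightarrow> rule option" where
  "choiceL c i = (if L_app c i then Some Lr else if R_app c i then Some Rr else None)"

definition choiceR :: "config \<Rightarrow> int \<Rightarrow> rule option" where
  "choiceR c i = (if R_app c i then Some Rr else if L_app c i then Some Lr else None)"

definition opL :: "config \<Rightarrow> config" where
  "opL c = apply_rules c (choiceL c)"

definition opR :: "config \<Rightarrow> config" where
  "opR c = apply_rules c (choiceR c)"

fun op_of :: "rule \<Rightarrow> config \<Rightarrow> config" where
  "op_of Lr = opL"
| "op_of Rr = opR"

text \<open>\<omega>(a) = \<omega>_2 ... \<omega>_k(\<omega>_1(a)): letters applied left to right.\<close>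
fun word_apply :: "rule list \<Rightarrow> config \<Rightarrow> config" where
  "word_apply [] a = a"
| "word_apply (x # w) a = word_apply w (op_of x a)"

definition Delta :: "config \<Rightarrow> config \<Rightarrow> int \<Rightarrow> int" where
  "Delta a b i = int (a i) - int (b i)"

definition tri_star :: "config \<Rightarrow> config \<Rightarrow> bool" where
  "tri_star a b \<longleftrightarrow> finite {i. Delta a b i \<noteq> 0} \<and>
     (\<exists>k. map (Delta a b) (sorted_list_of_set {i. Delta a b i \<noteq> 0})
            = concat (replicate k [-1, 1]))"

end

theory Submission
  imports Defs
begin

text \<open>
  Let x and y be the height functions of \<open>\<omega>(R(a))\<close> and \<open>\<omega>(L(a))\<close>. The relation
  \<open>x \<triangleleft>* y\<close> says exactly that \<open>x i - y i = D (i - 1) - D i\<close> for a finitely supported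
  0/1-valued D, i.e. y arises from x by moving, for every i with \<open>D i = 1\<close>, one grain from
  column \<open>i + 1\<close> to column i. After the first transition D marks the edges next to the
  choice column. Applying the same transition to x and y need not preserve such a
  displacement in general, but it does under one extra local condition: on every column
  where x and y differ, the higher of the two has no steep peak (slopes
  \<open>l, r \<ge> 0\<close> towards both neighbours with \<open>l + r \<ge> 4\<close>, except \<open>l = r = 2\<close>). The
  strengthened invariant holds after the first transition and is preserved by both L and R,
  each time by a finite check on a window of at most seven columns.
  Reachability is only needed for the configuration to be finitely supported.
\<close>

definition heights :: "config \<Rightarrow> int \<Rightarrow> int" where
  "heights c i = int (c i)"

definition can_topple_left :: "(int \<Rightarrow> int) \<Rightarrow> int \<Rightarrow> bool" where
  "can_topple_left f i \<longleftrightarrow> f (i - 1) + 2 \<le> f i"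

definition can_topple_right :: "(int \<Rightarrow> int) \<Rightarrow> int \<Rightarrow> bool" where
  "can_topple_right f i \<longleftrightarrow> f (i + 1) + 2 \<le> f i"

text \<open>The rule argument is the one chosen on a choice column, and \<open>flow r f i\<close> is the net
  number of grains crossing from column \<open>i + 1\<close> to column i.\<close>

fun fires_left :: "rule \<Rightarrow> (int \<Rightarrow> int) \<Rightarrow> int \<Rightarrow> bool" where
  "fires_left Lr f i \<longleftrightarrow> can_topple_left f i"
| "fires_left Rr f i \<longleftrightarrow> can_topple_left f i \<and> \<not> can_topple_right f i"

fun fires_right :: "rule \<Rightarrow> (int \<Rightarrow> int) \<Rightarrow> int \<Rightarrow> bool" where
  "fires_right Lr f i \<longleftrightarrow> can_topple_right f i \<and> \<not> can_topple_left f i"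
| "fires_right Rr f i \<longleftrightarrow> can_topple_right f i"

definition flow :: "rule \<Rightarrow> (int \<Rightarrow> int) \<Rightarrow> int \<Rightarrow> int" where
  "flow r f i = of_bool (fires_left r f (i + 1)) - of_bool (fires_right r f i)"

definition step :: "rule \<Rightarrow> (int \<Rightarrow> int) \<Rightarrow> int \<Rightarrow> int" where
  "step r f i = f i + flow r f i - flow r f (i - 1)"

lemma heights_apply_rules:
  assumes "d i \<noteq> None \<Longrightarrow> 1 \<le> c i"
  shows "heights (apply_rules c d) i = heights c i - of_bool (d i \<noteq> None)
      + of_bool (d (i + 1) = Some Lr) + of_bool (d (i - 1) = Some Rr)"
  using assms by (auto simp: apply_rules_def heights_def of_nat_diff)

lemma heights_opL: "heights (opL c) = step Lr (heights c)"
proof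
  fix i
  have "choiceL c i \<noteq> None \<Longrightarrow> 1 \<le> c i"
    by (auto simp: choiceL_def L_app_def R_app_def split: if_splits)
  from heights_apply_rules[where c=c and d="choiceL c" and i=i, OF this]
  show "heights (opL c) i = step Lr (heights c) i"
    unfolding opL_def
    by (auto simp: step_def flow_def choiceL_def L_app_def R_app_def heights_def
        can_topple_left_def can_topple_right_def)
qed

lemma heights_opR: "heights (opR c) = step Rr (heights c)"
proof
  fix i
  have "choiceR c i \<noteq> None \<Longrightarrow> 1 \<le> c i"
    by (auto simp: choiceR_def L_app_def R_app_def split: if_splits)
  from heights_apply_rules[where c=c and d="choiceR c" and i=i, OF this]
  show "heights (opR c) i = step Rr (heights c) i"
    unfolding opR_def
    by (auto simp: step_def flow_def choiceR_def L_app_def R_app_def heights_def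
        can_topple_left_def can_topple_right_def)
qed

lemma heights_op_of: "heights (op_of r c) = step r (heights c)"
  by (cases r) (simp_all add: heights_opL heights_opR)

lemma finite_near:
  fixes S :: "int set"
  assumes "finite S"
  shows "finite {j. \<exists>k\<in>{a..b}. j + k \<in> S}"
proof (rule finite_subset)
  show "{j. \<exists>k\<in>{a..b}. j + k \<in> S} \<subseteq> (\<lambda>(s, k). s - k) ` (S \<times> {a..b})"
    by (force simp: image_iff)
  show "finite ((\<lambda>(s, k). s - k) ` (S \<times> {a..b}))"
    using assms by simp
qed

lemma flow_cong:
  assumes "\<And>k. i - 1 \<le> k \<Longrightarrow> k \<le> i + 2 \<Longrightarrow> f k = g k"
  shows "flow r f i = flow r g i"
proof -
  have "f (i - 1) = g (i - 1)" "f i = g i" "f (i + 1) = g (i + 1)" "f (i + 2) = g (i + 2)"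
    by (simp_all add: assms)
  then show ?thesis
    by (cases r) (simp_all add: flow_def can_topple_left_def can_topple_right_def add.assoc)
qed

definition displacement :: "(int \<Rightarrow> int) \<Rightarrow> (int \<Rightarrow> int) \<Rightarrow> (int \<Rightarrow> int) \<Rightarrow> bool" where
  "displacement D x y \<longleftrightarrow>
     (\<forall>i. D i \<in> {0, 1}) \<and> finite {i. D i \<noteq> 0} \<and> (\<forall>i. x i - y i = D (i - 1) - D i)"

definition steep_peak :: "(int \<Rightarrow> int) \<Rightarrow> int \<Rightarrow> bool" where
  "steep_peak f i \<longleftrightarrow> (let l = f i - f (i - 1); r = f i - f (i + 1) in
     0 \<le> l \<and> 0 \<le> r \<and> 4 \<le> l + r \<and> \<not> (l = 2 \<and> r = 2))"

definition excess_not_steep :: "(int \<Rightarrow> int) \<Rightarrow> (int \<Rightarrow> int) \<Rightarrow> int \<Rightarrow> bool" where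
  "excess_not_steep x y i \<longleftrightarrow>
     (x i = y i + 1 \<longrightarrow> \<not> steep_peak x i) \<and> (y i = x i + 1 \<longrightarrow> \<not> steep_peak y i)"

definition coupled :: "(int \<Rightarrow> int) \<Rightarrow> (int \<Rightarrow> int) \<Rightarrow> bool" where
  "coupled x y \<longleftrightarrow> (\<exists>D. displacement D x y) \<and> (\<forall>i. excess_not_steep x y i)"

lemma displacement_step_bit:
  fixes x y D :: "int \<Rightarrow> int"
  assumes D01: "\<And>i. D i \<in> {0, 1}"
    and xy: "\<And>i. x i - y i = D (i - 1) - D i"
    and excess: "excess_not_steep x y j" "excess_not_steep x y (j + 1)"
  shows "D j + flow r y j - flow r x j \<in> {0, 1}"
proof -
  have y: "y i = x i - D (i - 1) + D i" for i
    using xy[of i] by simp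
  have shifts: "j + 1 - 1 = j" "j + 1 + 1 = j + 2" "j - 1 - 1 = j - 2" "j + 2 - 1 = j + 1"
    by simp_all
  txt \<open>Naming the heights in the window as scalars leaves smt a purely arithmetic case
    analysis, which it decides much faster than the same goal over function applications.\<close>
  define x0 x1 x2 x3 where xs: "x0 = x (j - 1)" "x1 = x j" "x2 = x (j + 1)" "x3 = x (j + 2)"
  define d0 d1 d2 d3 d4 where ds: "d0 = D (j - 2)" "d1 = D (j - 1)" "d2 = D j" "d3 = D (j + 1)"
    "d4 = D (j + 2)"
  have bits: "d0 \<in> {0, 1}" "d1 \<in> {0, 1}" "d2 \<in> {0, 1}" "d3 \<in> {0, 1}" "d4 \<in> {0, 1}"
    unfolding ds by (fact D01)+
  note window = excess_not_steep_def steep_peak_def flow_def Let_def y shifts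
    fires_left.simps fires_right.simps can_topple_left_def can_topple_right_def of_bool_def
    xs[symmetric] ds[symmetric] insert_iff empty_iff
  show ?thesis
  proof (cases r)
    case Lr
    show ?thesis using excess bits unfolding Lr by (simp only: window) (smt (verit))
  next
    case Rr
    show ?thesis using excess bits unfolding Rr by (simp only: window) (smt (verit))
  qed
qed

lemma excess_not_steep_step:
  fixes x y D :: "int \<Rightarrow> int"
  assumes D01: "\<And>i. D i \<in> {0, 1}"
    and xy: "\<And>i. x i - y i = D (i - 1) - D i"
    and excess: "excess_not_steep x y j"
  shows "excess_not_steep (step r x) (step r y) j"
proof -
  have y: "y i = x i - D (i - 1) + D i" for i
    using xy[of i] by simp
  have shifts: "j + 1 - 1 = j" "j - 1 + 1 = j" "j + 1 + 1 = j + 2" "j - 1 - 1 = j - 2"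
     "j + 2 + 1 = j + 3" "j - 2 - 1 = j - 3" "j + 2 - 1 = j + 1" "j - 2 + 1 = j - 1"
     "j - 3 - 1 = j - 4" "j + 3 - 1 = j + 2"
    by simp_all
  define x0 x1 x2 x3 x4 x5 x6 where xs: "x0 = x (j - 3)" "x1 = x (j - 2)" "x2 = x (j - 1)"
    "x3 = x j" "x4 = x (j + 1)" "x5 = x (j + 2)" "x6 = x (j + 3)"
  define d0 d1 d2 d3 d4 d5 d6 d7 where ds: "d0 = D (j - 4)" "d1 = D (j - 3)" "d2 = D (j - 2)"
    "d3 = D (j - 1)" "d4 = D j" "d5 = D (j + 1)" "d6 = D (j + 2)" "d7 = D (j + 3)"
  have bits: "d0 \<in> {0, 1}" "d1 \<in> {0, 1}" "d2 \<in> {0, 1}" "d3 \<in> {0, 1}" "d4 \<in> {0, 1}"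
    "d5 \<in> {0, 1}" "d6 \<in> {0, 1}" "d7 \<in> {0, 1}"
    unfolding ds by (fact D01)+
  note window = excess_not_steep_def steep_peak_def step_def flow_def Let_def y shifts
    fires_left.simps fires_right.simps can_topple_left_def can_topple_right_def of_bool_def
    xs[symmetric] ds[symmetric] insert_iff empty_iff
  show ?thesis
  proof (cases r)
    case Lr
    show ?thesis using excess bits unfolding Lr by (simp only: window) (intro conjI; smt (verit))
  next
    case Rr
    show ?thesis using excess bits unfolding Rr by (simp only: window) (intro conjI; smt (verit))
  qed
qed

lemma coupled_step:
  assumes "coupled x y"
  shows "coupled (step r x) (step r y)"
proof -
  obtain D where D01: "\<And>i. D i \<in> {0, 1}" and fin: "finite {i. D i \<noteq> 0}"
    and xy: "\<And>i. x i - y i = D (i - 1) - D i" and excess: "\<And>i. excess_not_steep x y i"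
    using assms unfolding coupled_def displacement_def by blast
  define D' where "D' j = D j + flow r y j - flow r x j" for j
  have "D' j \<in> {0, 1}" for j
    unfolding D'_def by (rule displacement_step_bit[OF D01 xy excess excess])
  moreover have "step r x i - step r y i = D' (i - 1) - D' i" for i
    using xy[of i] by (simp add: D'_def step_def)
  moreover have "finite {j. D' j \<noteq> 0}"
  proof (rule finite_subset)
    show "{j. D' j \<noteq> 0} \<subseteq> {j. \<exists>k\<in>{-2..2}. j + k \<in> {i. D i \<noteq> 0}}"
    proof (rule subsetI, rule ccontr)
      fix j assume "j \<in> {j. D' j \<noteq> 0}" "j \<notin> {j. \<exists>k\<in>{-2..2}. j + k \<in> {i. D i \<noteq> 0}}"
      then have nz: "D' j \<noteq> 0" and far: "\<And>k. -2 \<le> k \<Longrightarrow> k \<le> 2 \<Longrightarrow> D (j + k) = 0"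
        by auto
      have "x k = y k" if "j - 1 \<le> k" "k \<le> j + 2" for k
        using xy[of k] far[of "k - j"] far[of "k - 1 - j"] that by simp
      then have "flow r x j = flow r y j"
        by (rule flow_cong)
      then show False
        using nz far[of 0] by (simp add: D'_def)
    qed
  qed (rule finite_near[OF fin])
  ultimately have "displacement D' (step r x) (step r y)"
    unfolding displacement_def by blast
  moreover have "excess_not_steep (step r x) (step r y) i" for i
    by (rule excess_not_steep_step[OF D01 xy excess])
  ultimately show ?thesis
    unfolding coupled_def by blast
qed

lemma coupled_word_apply:
  assumes "coupled (heights a) (heights b)"
  shows "coupled (heights (word_apply w a)) (heights (word_apply w b))"
  using assms
proof (induction w arbitrary: a b)
  case (Cons r w)
  then show ?case
    by (simp add: heights_op_of coupled_step)
qed simp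

lemma choice_flow_bit: "flow Lr f j - flow Rr f j \<in> {0, 1}"
  by (auto simp: flow_def can_topple_left_def can_topple_right_def)

lemma choice_flow_support:
  assumes "\<And>i. 0 \<le> f i" and "flow Lr f j \<noteq> flow Rr f j"
  shows "f j \<noteq> 0 \<or> f (j + 1) \<noteq> 0"
  using assms(2) assms(1)[of "j - 1"] assms(1)[of j] assms(1)[of "j + 1"] assms(1)[of "j + 2"]
  by (auto simp: flow_def can_topple_left_def can_topple_right_def add.assoc)

lemma excess_not_steep_first_step: "excess_not_steep (step Rr f) (step Lr f) j"
proof -
  have shifts: "j + 1 - 1 = j" "j - 1 + 1 = j" "j + 1 + 1 = j + 2" "j - 1 - 1 = j - 2"
     "j + 2 + 1 = j + 3" "j - 2 - 1 = j - 3" "j + 2 - 1 = j + 1" "j - 2 + 1 = j - 1"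
    by simp_all
  define f0 f1 f2 f3 f4 f5 f6 where fs: "f0 = f (j - 3)" "f1 = f (j - 2)" "f2 = f (j - 1)"
    "f3 = f j" "f4 = f (j + 1)" "f5 = f (j + 2)" "f6 = f (j + 3)"
  show ?thesis
    by (simp only: excess_not_steep_def steep_peak_def step_def flow_def Let_def shifts
        fires_left.simps fires_right.simps can_topple_left_def can_topple_right_def of_bool_def
        fs[symmetric]) (intro conjI; smt (z3))
qed

lemma coupled_first_step:
  assumes "finite {i. a i \<noteq> 0}"
  shows "coupled (heights (opR a)) (heights (opL a))"
proof -
  define f where "f = heights a"
  define D where "D j = flow Lr f j - flow Rr f j" for j
  have "D j \<in> {0, 1}" for j
    unfolding D_def by (rule choice_flow_bit)
  moreover have "step Rr f i - step Lr f i = D (i - 1) - D i" for i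
    by (simp add: D_def step_def)
  moreover have "finite {j. D j \<noteq> 0}"
  proof (rule finite_subset)
    show "{j. D j \<noteq> 0} \<subseteq> {j. \<exists>k\<in>{0..1}. j + k \<in> {i. a i \<noteq> 0}}"
      using choice_flow_support[of f] by (force simp: D_def f_def heights_def)
  qed (rule finite_near[OF assms])
  ultimately have "displacement D (step Rr f) (step Lr f)"
    unfolding displacement_def by blast
  then show ?thesis
    unfolding coupled_def heights_opL heights_opR f_def
    using excess_not_steep_first_step by blast
qed

lemma alternating_prefix:
  fixes D E :: "int \<Rightarrow> int"
  assumes D01: "\<And>i. D i \<in> {0, 1}" and E: "\<And>i. E i = D (i - 1) - D i"
    and start: "D (lo - 1) = 0" and "lo \<le> m"
  shows "\<exists>k. map E (filter (\<lambda>i. E i \<noteq> 0) [lo..m])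
           = concat (replicate k [-1, 1]) @ (if D m = 1 then [-1] else [])"
  using \<open>lo \<le> m\<close>
proof (induction m rule: int_ge_induct)
  case base
  show ?case
    using D01[of lo] E[of lo] start by (auto intro: exI[of _ 0])
next
  case (step m)
  then obtain k where k: "map E (filter (\<lambda>i. E i \<noteq> 0) [lo..m])
      = concat (replicate k [-1, 1]) @ (if D m = 1 then [-1] else [])"
    by blast
  have upto: "[lo..m + 1] = [lo..m] @ [m + 1]"
    using step.hyps upto_rec2[of lo "m + 1"] by simp
  have "concat (replicate (Suc k) [-1, 1::int]) = concat (replicate k [-1, 1]) @ [-1, 1]"
    by (simp add: replicate_append_same[symmetric])
  then show ?case
    using D01[of m] D01[of "m + 1"] E[of "m + 1"] k unfolding upto
    by (auto intro: exI[of _ k] exI[of _ "Suc k"])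
qed

lemma tri_star_if_displacement:
  assumes "displacement D (heights a) (heights b)"
  shows "tri_star a b"
proof -
  have D01: "\<And>i. D i \<in> {0, 1}" and fin: "finite {i. D i \<noteq> 0}"
    and Delta: "\<And>i. Delta a b i = D (i - 1) - D i"
    using assms by (simp_all add: displacement_def Delta_def heights_def)
  show ?thesis
  proof (cases "{i. D i \<noteq> 0} = {}")
    case True
    then show ?thesis
      using Delta unfolding tri_star_def by (auto intro: exI[of _ 0])
  next
    case False
    define lo where "lo = Min {i. D i \<noteq> 0}"
    define hi where "hi = Max {i. D i \<noteq> 0}"
    have outside: "D i = 0" if "i < lo \<or> hi < i" for i
      using that fin unfolding lo_def hi_def by (meson Max_ge Min_le mem_Collect_eq not_le)
    have "lo \<le> hi"
      using False fin unfolding lo_def hi_def by (auto intro: order_trans[OF Min_le Max_ge])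
    have "Delta a b i = 0" if "i < lo \<or> hi + 1 < i" for i
      using Delta[of i] outside[of i] outside[of "i - 1"] that by auto
    then have support:
      "{i. Delta a b i \<noteq> 0} = set (filter (\<lambda>i. Delta a b i \<noteq> 0) [lo..hi + 1])"
      by force
    have sorted_support: "sorted_list_of_set {i. Delta a b i \<noteq> 0}
        = filter (\<lambda>i. Delta a b i \<noteq> 0) [lo..hi + 1]"
      unfolding support sorted_list_of_set_sort_remdups
      using sorted_wrt_filter[OF sorted_upto] by (simp add: distinct_remdups_id sorted_sort_id)
    obtain k where "map (Delta a b) (filter (\<lambda>i. Delta a b i \<noteq> 0) [lo..hi + 1])
        = concat (replicate k [-1, 1]) @ (if D (hi + 1) = 1 then [-1] else [])"
      using alternating_prefix[where D=D and E="Delta a b" and lo=lo and m="hi + 1", OF D01 Delta]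
        outside \<open>lo \<le> hi\<close>
      by auto
    then have "map (Delta a b) (sorted_list_of_set {i. Delta a b i \<noteq> 0})
        = concat (replicate k [-1, 1])"
      unfolding sorted_support using outside[of "hi + 1"] by simp
    moreover have "finite {i. Delta a b i \<noteq> 0}"
      unfolding support by (rule finite_set)
    ultimately show ?thesis
      unfolding tri_star_def by blast
  qed
qed

lemma reachable_finite_support:
  assumes "reachable n c"
  shows "finite {i. c i \<noteq> 0}"
  using assms
proof (induction rule: reachable.induct)
  case init
  have "{i. single n i \<noteq> 0} \<subseteq> {0}"
    by (auto simp: single_def)
  then show ?case
    by (rule finite_subset) simp
next
  case (step c c')
  obtain d where d: "admissible c d" and c': "c' = apply_rules c d"
    using step.hyps(2) unfolding psspm_step_def by blast
  have "{i. c' i \<noteq> 0} \<subseteq> {i. \<exists>k\<in>{-1..1}. i + k \<in> {i. c i \<noteq> 0}}"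
  proof
    fix i assume "i \<in> {i. c' i \<noteq> 0}"
    moreover have "c (i + 1) \<noteq> 0" if "d (i + 1) = Some Lr"
      using d that unfolding admissible_def L_app_def by fastforce
    moreover have "c (i - 1) \<noteq> 0" if "d (i - 1) = Some Rr"
      using d that unfolding admissible_def R_app_def by fastforce
    ultimately have "c i \<noteq> 0 \<or> c (i + 1) \<noteq> 0 \<or> c (i - 1) \<noteq> 0"
      unfolding c' apply_rules_def by (auto split: if_splits)
    then show "i \<in> {i. \<exists>k\<in>{-1..1}. i + k \<in> {i. c i \<noteq> 0}}"
      by (force intro: bexI[of _ 0] bexI[of _ 1] bexI[of _ "-1"])
  qed
  then show ?case
    by (rule finite_subset) (rule finite_near[OF step.IH])
qed

theorem proposition2:
  fixes n :: nat and a :: config and \<omega> :: "rule list"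
  assumes "reachable n a"
  shows "tri_star (word_apply \<omega> (opR a)) (word_apply \<omega> (opL a))"
proof -
  have "coupled (heights (opR a)) (heights (opL a))"
    using coupled_first_step reachable_finite_support[OF assms] .
  then have "coupled (heights (word_apply \<omega> (opR a))) (heights (word_apply \<omega> (opL a)))"
    by (rule coupled_word_apply)
  then obtain D
    where "displacement D (heights (word_apply \<omega> (opR a))) (heights (word_apply \<omega> (opL a)))"
    unfolding coupled_def by blast
  then show ?thesis
    by (rule tri_star_if_displacement)
qed

end
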